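(* Let $\mathfrak{B}$ be a finite subgroup of $\mathrm{SL}(2,\mathbb{C})$ closed under $B\mapsto -B$ and under transposition, and let $\mathcal{G}=\{[B]:B\in\mathfrak{B}\}$. Suppose $g=[A]\in\mathcal{G}$ has order $2$ and satisfies $[A^T]=[A]$. Then either there exists a complex matrix $M\in\mathbb{C}^{2\times 2}$ with $MM^T=I$ such that $M^TAM\in\left\{\begin{pmatrix} i&0\\0&-i\end{pmatrix},\ -\begin{pmatrix} i&0\\0&-i\end{pmatrix}\right\}$, or $g=\left[\begin{pmatrix}0&1\\-1&0\end{pmatrix}\right]$.
   Context: $[B]$ denotes the set $\{B,-B\}$; $\mathcal{G}$ is a group under $[B_1][B_2]=[B_1B_2]$ with identity $[I]$. An element $g$ has order $2$ if $g\neq[I]$ and $g^2=[I]$. A complex matrix $M$ with $MM^T=I$ is called (complex) orthogonal (this is not the unitary condition). *)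

theory Defs
  imports "HOL-Analysis.Analysis"
begin

type_synonym cmat2 = "complex^2^2"

definition pclass :: "cmat2 \<Rightarrow> cmat2 set" where
  "pclass B = {B, - B}"

definition finite_SL2_subgroup :: "cmat2 set \<Rightarrow> bool" where
  "finite_SL2_subgroup S \<longleftrightarrow>
     finite S \<and> S \<subseteq> {B. det B = 1} \<and> mat 1 \<in> S \<and>
     (\<forall>A\<in>S. \<forall>B\<in>S. A ** B \<in> S) \<and> (\<forall>A\<in>S. matrix_inv A \<in> S)"

definition diagI :: cmat2 where
  "diagI = (\<chi> i j. if i = 1 \<and> j = 1 then \<i> else if i = 2 \<and> j = 2 then - \<i> else 0)"

definition Jmat :: cmat2 where
  "Jmat = (\<chi> i j. if i = 1 \<and> j = 2 then 1 else if i = 2 \<and> j = 1 then - 1 else 0)"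

end

theory Submission
  imports Defs
begin

text \<open>
  If \<open>A\<^sup>T = -A\<close>, then \<open>A\<close> has zero diagonal and
  determinant 1, so \<open>A = \<plusminus>J\<close>. Otherwise \<open>A\<close> is symmetric. In \<open>SL(2)\<close> the only
  matrices with \<open>A\<^sup>2 = I\<close> are \<open>\<plusminus>I\<close>, so \<open>A\<^sup>2 = -I\<close>, which forces \<open>tr A = 0\<close>; hence
  \<open>A = [[a, b], [b, -a]]\<close> with \<open>a\<^sup>2 + b\<^sup>2 = -1\<close>. A complex rotation
  \<open>M = [[p, -q], [q, p]]\<close> with \<open>p\<^sup>2 + q\<^sup>2 = 1\<close>, \<open>p\<^sup>2 - q\<^sup>2 = -ia\<close>, \<open>2pq = -ib\<close> then
  conjugates \<open>A\<close> to \<open>diag(i, -i)\<close>.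
\<close>

definition mat2 :: "'a::zero \<Rightarrow> 'a \<Rightarrow> 'a \<Rightarrow> 'a \<Rightarrow> 'a^2^2" where
  "mat2 a b c d = vector [vector [a, b], vector [c, d]]"

lemma mat2_nth [simp]:
  "mat2 a b c d $ 1 $ 1 = a" "mat2 a b c d $ 1 $ 2 = b"
  "mat2 a b c d $ 2 $ 1 = c" "mat2 a b c d $ 2 $ 2 = d"
  by (simp_all add: mat2_def)

lemma mat2_eq_iff [simp]:
  "mat2 a b c d = mat2 a' b' c' d' \<longleftrightarrow> a = a' \<and> b = b' \<and> c = c' \<and> d = d'"
  by (metis mat2_nth)

lemma mat2_cases:
  obtains a b c d where "A = mat2 a b c d"
proof
  show "A = mat2 (A$1$1) (A$1$2) (A$2$1) (A$2$2)"
    by (simp add: vec_eq_iff forall_2)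
qed

lemma mat2_mult [simp]:
  fixes a b c d :: "'a::comm_semiring_1"
  shows "mat2 a b c d ** mat2 a' b' c' d' =
    mat2 (a*a' + b*c') (a*b' + b*d') (c*a' + d*c') (c*b' + d*d')"
  by (simp add: vec_eq_iff forall_2 matrix_matrix_mult_def sum_2)

lemma transpose_mat2 [simp]: "transpose (mat2 a b c d) = mat2 a c b d"
  by (simp add: vec_eq_iff forall_2 transpose_def)

lemma uminus_mat2 [simp]:
  fixes a b c d :: "'a::ab_group_add"
  shows "- mat2 a b c d = mat2 (-a) (-b) (-c) (-d)"
  by (simp add: vec_eq_iff forall_2)

lemma det_mat2 [simp]: "det (mat2 a b c d) = a * d - b * c"
  by (simp add: det_2)

lemma mat_1_eq_mat2: "mat 1 = mat2 1 0 0 1"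
  by (simp add: vec_eq_iff forall_2 mat_def)

lemma diagI_eq_mat2: "diagI = mat2 \<i> 0 0 (- \<i>)"
  by (simp add: vec_eq_iff forall_2 diagI_def)

lemma Jmat_eq_mat2: "Jmat = mat2 0 1 (-1) 0"
  by (simp add: vec_eq_iff forall_2 Jmat_def)

lemma pclass_eq_iff: "pclass A = pclass B \<longleftrightarrow> A = B \<or> A = - B"
  unfolding pclass_def by (auto simp: doubleton_eq_iff)

lemma SL2_involution_eq_pm_1:
  fixes A :: "'a::field_char_0^2^2"
  assumes "det A = 1" and "A ** A = mat 1"
  shows "A = mat 1 \<or> A = - mat 1"
proof -
  obtain a b c d where A: "A = mat2 a b c d" by (rule mat2_cases)
  have det: "a * d - b * c = 1"
    and sq: "a*a + b*c = 1" "b * (a + d) = 0" "c * (a + d) = 0" "d*d + b*c = 1"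
    using assms by (auto simp: A mat_1_eq_mat2 algebra_simps)
  have "a + d \<noteq> 0"
  proof
    assume "a + d = 0"
    then have "d = - a" by (simp add: add_eq_0_iff)
    then have "a * d - b * c = - (a*a + b*c)" by simp
    with det sq(1) show False by simp
  qed
  then have "b = 0" "c = 0" using sq by simp_all
  with det sq have "a * a = 1" "a * d = 1" "d * d = 1" by simp_all
  then have "(a = 1 \<and> d = 1) \<or> (a = -1 \<and> d = -1)"
    by (metis mult_cancel_left1 mult_minus_left square_eq_1_iff)
  then show ?thesis by (auto simp: A mat_1_eq_mat2 \<open>b = 0\<close> \<open>c = 0\<close>)
qed

lemma SL2_square_eq_neg_1_trace_zero:
  fixes A :: "'a::field^2^2"
  assumes "det A = 1" and "A ** A = - mat 1"
  shows "A $ 2 $ 2 = - A $ 1 $ 1"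
proof -
  obtain a b c d where A: "A = mat2 a b c d" by (rule mat2_cases)
  have det: "a * d - b * c = 1"
    and sq: "a*a + b*c = -1" "b * (a + d) = 0" "c * (a + d) = 0"
    using assms by (auto simp: A mat_1_eq_mat2 algebra_simps)
  have "a + d = 0"
  proof (rule ccontr)
    assume "a + d \<noteq> 0"
    then have "b = 0" "c = 0" using sq by simp_all
    with det sq have "a * (a + d) = 0" by (simp add: algebra_simps)
    with \<open>a + d \<noteq> 0\<close> have "a = 0" by simp
    with det \<open>b = 0\<close> show False by simp
  qed
  then show ?thesis by (simp add: A eq_neg_iff_add_eq_0 add.commute)
qed

lemma SL2_skew_symmetric_eq_pm_Jmat:
  fixes A :: cmat2
  assumes "transpose A = - A" and "det A = 1"
  shows "A = Jmat \<or> A = - Jmat"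
proof -
  obtain a b c d where A: "A = mat2 a b c d" by (rule mat2_cases)
  from assms(1) have "a = - a" "c = - b" "d = - d"
    unfolding A transpose_mat2 uminus_mat2 mat2_eq_iff by blast+
  then have "a = 0" "d = 0" "c = - b"
    by simp_all
  with assms(2) have "b * b = 1"
    by (simp add: A)
  with \<open>a = 0\<close> \<open>d = 0\<close> \<open>c = - b\<close> show ?thesis
    by (auto simp: A Jmat_eq_mat2 square_eq_1_iff)
qed

lemma complex_rotation_parameters:
  fixes a b :: complex
  assumes "a*a + b*b = -1"
  obtains p q where "p*p + q*q = 1" "p*p - q*q = - \<i> * a" "2*p*q = - \<i> * b"
proof -
  define z where "z = csqrt (b - \<i> * a)"
  have z2: "z * z = b - \<i> * a"
    unfolding z_def by (metis power2_csqrt power2_eq_square)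
  have "(b - \<i> * a) * (- b - \<i> * a) = - (a*a + b*b)"
    by (simp add: algebra_simps)
  with assms have "(b - \<i> * a) * (- b - \<i> * a) = 1" by simp
  then have "z \<noteq> 0" using z2 by auto
  define w where "w = inverse z"
  have zw: "z * w = 1" using \<open>z \<noteq> 0\<close> by (simp add: w_def)
  have w2: "w * w = - b - \<i> * a"
  proof -
    have "(z*z) * (w*w) = 1" using zw by (metis mult.assoc mult.commute mult_1_right)
    with \<open>(b - \<i> * a) * (- b - \<i> * a) = 1\<close> z2 \<open>z \<noteq> 0\<close> show ?thesis
      by (metis mult_left_cancel mult_eq_0_iff)
  qed
  text \<open>The witnesses solve \<open>(p + iq)\<^sup>2 = z\<^sup>2\<close> and \<open>(p - iq)\<^sup>2 = w\<^sup>2\<close>.\<close>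
  define p where "p = (z + w) / 2"
  define q where "q = (z - w) / (2 * \<i>)"
  have "p*p + q*q = z * w" by (simp add: p_def q_def field_simps)
  moreover have "p*p - q*q = (z*z + w*w) / 2" by (simp add: p_def q_def field_simps)
  moreover have "2*p*q = - \<i> * (z*z - w*w) / 2" by (simp add: p_def q_def field_simps)
  ultimately show ?thesis
    using that zw z2 w2 by (simp add: field_simps)
qed

lemma SL2_symmetric_traceless_orthogonally_similar_diagI:
  fixes A :: cmat2
  assumes "transpose A = A" and "A $ 2 $ 2 = - A $ 1 $ 1" and "det A = 1"
  shows "\<exists>M. M ** transpose M = mat 1 \<and> transpose M ** A ** M = diagI"
proof -
  obtain a b c d where A: "A = mat2 a b c d" by (rule mat2_cases)
  from assms(1) have "c = b"
    unfolding A transpose_mat2 mat2_eq_iff by blast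
  with assms(2) have A_ab: "A = mat2 a b b (- a)"
    by (simp add: A)
  from assms(3) have "- (a*a + b*b) = 1"
    by (simp add: A_ab)
  then have ab: "a*a + b*b = -1"
    by (metis minus_equation_iff)
  obtain p q where pq: "p*p + q*q = 1" "p*p - q*q = - \<i> * a" "2*p*q = - \<i> * b"
    using ab by (rule complex_rotation_parameters)
  define M where "M = mat2 p (- q) q p"
  have "M ** transpose M = mat2 (p*p + q*q) 0 0 (p*p + q*q)"
    by (simp add: M_def algebra_simps)
  also have "\<dots> = mat 1"
    by (simp add: pq(1) mat_1_eq_mat2)
  finally have orthogonal: "M ** transpose M = mat 1" .
  have "transpose M ** A ** M =
      mat2 (a*(p*p - q*q) + b*(2*p*q)) (b*(p*p - q*q) - a*(2*p*q))
           (b*(p*p - q*q) - a*(2*p*q)) (- (a*(p*p - q*q) + b*(2*p*q)))"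
    by (simp add: M_def A_ab algebra_simps)
  also have "\<dots> = mat2 (- \<i> * (a*a + b*b)) 0 0 (\<i> * (a*a + b*b))"
    unfolding pq(2,3) by (simp add: algebra_simps)
  also have "\<dots> = diagI"
    by (simp add: ab diagI_eq_mat2)
  finally show ?thesis
    using orthogonal by blast
qed

theorem mainTheorem7:
  fixes S :: "cmat2 set" and A :: cmat2
  assumes "finite_SL2_subgroup S"
    and "\<forall>B\<in>S. - B \<in> S"
    and "\<forall>B\<in>S. transpose B \<in> S"
    and "A \<in> S"
    and "pclass A \<noteq> pclass (mat 1)"
    and "pclass (A ** A) = pclass (mat 1)"
    and "pclass (transpose A) = pclass A"
  shows "(\<exists>M :: cmat2. M ** transpose M = mat 1 \<and>
            (transpose M ** A ** M = diagI \<or> transpose M ** A ** M = - diagI))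
         \<or> pclass A = pclass Jmat"
proof -
  have det: "det A = 1"
    using assms(1,4) unfolding finite_SL2_subgroup_def by auto
  from assms(7) have "transpose A = - A \<or> transpose A = A"
    by (auto simp: pclass_eq_iff)
  then show ?thesis
  proof
    assume "transpose A = - A"
    then have "A = Jmat \<or> A = - Jmat"
      using det by (rule SL2_skew_symmetric_eq_pm_Jmat)
    then show ?thesis by (auto simp: pclass_eq_iff)
  next
    assume symmetric: "transpose A = A"
    have "A ** A \<noteq> mat 1"
      using SL2_involution_eq_pm_1[OF det] assms(5) by (auto simp: pclass_eq_iff)
    with assms(6) have "A ** A = - mat 1"
      by (auto simp: pclass_eq_iff)
    then have "A $ 2 $ 2 = - A $ 1 $ 1"
      using det by (intro SL2_square_eq_neg_1_trace_zero)
    then show ?thesis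
      using SL2_symmetric_traceless_orthogonally_similar_diagI[OF symmetric _ det] by blast
  qed
qed

end
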